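(* Let $M$ be the statistical manifold of the beta-logistic distributions $$p(x;\theta^1,\theta^2)=\frac{2^{1-\theta^1}\operatorname{sech}^{\theta^1}(x)\,e^{\theta^2x}}{B\left(\frac{\theta^1-\theta^2}{2},\frac{\theta^1+\theta^2}{2}\right)},\qquad x\in\mathbb{R},\quad (\theta^1,\theta^2)\in\Theta=\{\theta^1\pm\theta^2>0\}.$$ Then $M$ is $\pm1$-flat, i.e. the $\alpha$-curvature tensor vanishes identically for $\alpha=1$ and $\alpha=-1$. Moreover, writing $a=\frac{\theta^1-\theta^2}{2}$, $b=\frac{\theta^1+\theta^2}{2}$, $p=\psi'(a)$, $q=\psi'(b)$, $r=\psi'(\theta^1)$, $s=\psi''(a)$, $u=\psi''(b)$, $v=\psi''(\theta^1)$, for $\alpha=0$ the quantity $K=R^{(0)}_{1212}/\det G$ equals $$K=\frac{u(sr-vp)-vsq}{4\big(rp+(r-p)q\big)^2}.$$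
   Context: $B$ is the beta function, $\psi=\Gamma'/\Gamma$ the digamma function, $\psi',\psi''$ its derivatives. With $l=\ln p$, $\partial_i=\partial/\partial\theta^i$: the Fisher metric is $g_{ij}=\mathbb{E}[\partial_il\,\partial_jl]$, $G=(g_{ij})$, $(g^{ij})=G^{-1}$, $T_{ijk}=\mathbb{E}[\partial_il\,\partial_jl\,\partial_kl]$, $\Gamma_{ijk}=\frac12(\partial_ig_{jk}+\partial_jg_{ki}-\partial_kg_{ij})$, the $\alpha$-connection $\nabla^{(\alpha)}$ has coefficients $\Gamma^{(\alpha)}_{ijk}=\Gamma_{ijk}-\frac{\alpha}{2}T_{ijk}$ and $\Gamma^{(\alpha)k}_{ij}=\Gamma^{(\alpha)}_{ijs}g^{sk}$, $\nabla^{(\alpha)}_{\partial_i}\partial_j=\Gamma^{(\alpha)k}_{ij}\partial_k$. The $\alpha$-curvature tensor is $R^{(\alpha)}_{ijkl}=g\big(R^{(\alpha)}(\partial_i,\partial_j)\partial_k,\partial_l\big)$ with $R^{(\alpha)}(X,Y)=\nabla^{(\alpha)}_X\nabla^{(\alpha)}_Y-\nabla^{(\alpha)}_Y\nabla^{(\alpha)}_X-\nabla^{(\alpha)}_{[X,Y]}$. The case $\alpha=0$ is the Levi-Civita connection of the Fisher metric. *)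

theory Defs
  imports "HOL-Analysis.Analysis"
begin

text \<open>Parameters theta = (theta1, theta2) :: real \<times> real; coordinate indices are 1 and 2.\<close>

definition sech :: "real \<Rightarrow> real" where
  "sech x = 1 / cosh x"

definition Theta :: "(real \<times> real) set" where
  "Theta = {th. fst th - snd th > 0 \<and> fst th + snd th > 0}"

definition blpdf :: "real \<times> real \<Rightarrow> real \<Rightarrow> real" where
  "blpdf th x = (2 powr (1 - fst th) * sech x powr (fst th) * exp (snd th * x)) /
      Beta ((fst th - snd th) / 2) ((fst th + snd th) / 2)"

definition loglik :: "real \<times> real \<Rightarrow> real \<Rightarrow> real" where
  "loglik th x = ln (blpdf th x)"

definition cdir :: "nat \<Rightarrow> real \<times> real" where
  "cdir i = (if i = 1 then (1, 0) else (0, 1))"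

definition pd :: "nat \<Rightarrow> (real \<times> real \<Rightarrow> real) \<Rightarrow> real \<times> real \<Rightarrow> real" where
  "pd i f th = deriv (\<lambda>t. f (th + t *\<^sub>R cdir i)) 0"

definition Ex :: "real \<times> real \<Rightarrow> (real \<Rightarrow> real) \<Rightarrow> real" where
  "Ex th f = (LINT x|lborel. blpdf th x * f x)"

definition score :: "nat \<Rightarrow> real \<times> real \<Rightarrow> real \<Rightarrow> real" where
  "score i th x = pd i (\<lambda>eta. loglik eta x) th"

definition fisher :: "nat \<Rightarrow> nat \<Rightarrow> real \<times> real \<Rightarrow> real" where
  "fisher i j th = Ex th (\<lambda>x. score i th x * score j th x)"

definition skewT :: "nat \<Rightarrow> nat \<Rightarrow> nat \<Rightarrow> real \<times> real \<Rightarrow> real" where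
  "skewT i j k th = Ex th (\<lambda>x. score i th x * score j th x * score k th x)"

definition detG :: "real \<times> real \<Rightarrow> real" where
  "detG th = fisher 1 1 th * fisher 2 2 th - fisher 1 2 th * fisher 2 1 th"

definition fisher_inv :: "nat \<Rightarrow> nat \<Rightarrow> real \<times> real \<Rightarrow> real" where
  "fisher_inv i j th =
     (if i = 1 \<and> j = 1 then fisher 2 2 th
      else if i = 2 \<and> j = 2 then fisher 1 1 th
      else - fisher i j th) / detG th"

definition christoffel :: "nat \<Rightarrow> nat \<Rightarrow> nat \<Rightarrow> real \<times> real \<Rightarrow> real" where
  "christoffel i j k th =
     (pd i (fisher j k) th + pd j (fisher k i) th - pd k (fisher i j) th) / 2"

definition alpha_conn_low :: "real \<Rightarrow> nat \<Rightarrow> nat \<Rightarrow> nat \<Rightarrow> real \<times> real \<Rightarrow> real" where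
  "alpha_conn_low \<alpha> i j k th = christoffel i j k th - \<alpha> / 2 * skewT i j k th"

definition alpha_conn :: "real \<Rightarrow> nat \<Rightarrow> nat \<Rightarrow> nat \<Rightarrow> real \<times> real \<Rightarrow> real" where
  "alpha_conn \<alpha> i j k th = (\<Sum>s\<in>{1,2}. alpha_conn_low \<alpha> i j s th * fisher_inv s k th)"

text \<open>R(d_i,d_j) d_k = sum_n c_n d_n with [d_i,d_j] = 0 for coordinate fields:
  c_n = d_i Gamma^n_jk - d_j Gamma^n_ik + sum_m (Gamma^m_jk Gamma^n_im - Gamma^m_ik Gamma^n_jm);
  R_ijkl = g(R(d_i,d_j) d_k, d_l) = sum_n c_n g_nl.\<close>
definition alpha_curv :: "real \<Rightarrow> nat \<Rightarrow> nat \<Rightarrow> nat \<Rightarrow> nat \<Rightarrow> real \<times> real \<Rightarrow> real" where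
  "alpha_curv \<alpha> i j k l th =
     (\<Sum>n\<in>{1,2}.
        (pd i (alpha_conn \<alpha> j k n) th - pd j (alpha_conn \<alpha> i k n) th
         + (\<Sum>m\<in>{1,2}. alpha_conn \<alpha> j k m th * alpha_conn \<alpha> i m n th
                        - alpha_conn \<alpha> i k m th * alpha_conn \<alpha> j m n th))
        * fisher n l th)"

end

theory Submission
  imports Defs "HOL-Real_Asymp.Real_Asymp"
begin

text \<open>Substituting \<open>x = artanh (2 t - 1)\<close> turns the normalising integral into a Beta integral, so
  \<open>p(x; \<theta>) = exp (\<theta>\<^sup>1 T x + \<theta>\<^sup>2 x - \<phi> \<theta>)\<close> with \<open>T x = ln (sech x) - ln 2\<close> and
  \<open>\<phi> \<theta> = ln (B (a, b)) - ln 2 = ln \<Gamma> a + ln \<Gamma> b - ln \<Gamma> \<theta>\<^sup>1 - ln 2\<close>: an exponential family with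
  natural parameter \<open>\<theta>\<close>. Differentiating the moment generating function of the score under the
  integral sign gives \<open>g\<^sub>i\<^sub>j = \<partial>\<^sub>i \<partial>\<^sub>j \<phi>\<close> and \<open>T\<^sub>i\<^sub>j\<^sub>k = \<partial>\<^sub>i \<partial>\<^sub>j \<partial>\<^sub>k \<phi>\<close>, explicit in \<open>\<psi>'\<close> and \<open>\<psi>''\<close>;
  \<open>det G > 0\<close> because no nontrivial combination of the scores vanishes identically. Hence
  \<open>\<Gamma>\<^sup>\<alpha>\<^sub>i\<^sub>j\<^sub>k = (1 - \<alpha>) / 2 * \<partial>\<^sub>i \<partial>\<^sub>j \<partial>\<^sub>k \<phi>\<close>: the \<open>1\<close>-connection vanishes, the \<open>-1\<close>-connection
  is flat because \<open>g\<close> is a Hessian metric, and \<open>R\<^sup>\<alpha> = - (1 - \<alpha>\<^sup>2) / 4 * Q\<close> for the quadratic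
  part \<open>Q\<close> of \<open>R\<^sup>-\<^sup>1\<close>, which at \<open>\<alpha> = 0\<close> evaluates to the stated \<open>K\<close>.\<close>

section \<open>Normalisation of the beta-logistic kernel\<close>

lemma sech_pos: "sech x > 0"
  unfolding sech_def by simp

definition half_logit :: "real \<Rightarrow> real" where
  "half_logit t = (ln t - ln (1 - t)) / 2"

definition bl_kernel :: "real \<Rightarrow> real \<Rightarrow> real \<Rightarrow> real" where
  "bl_kernel c d x = 2 powr (1 - c) * sech x powr c * exp (d * x)"

lemma blpdf_eq_bl_kernel:
  "blpdf th x = bl_kernel (fst th) (snd th) x / Beta ((fst th - snd th) / 2) ((fst th + snd th) / 2)"
  by (simp add: blpdf_def bl_kernel_def)

lemma ln_sech_half_logit:
  assumes t: "0 < t" "t < 1"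
  shows "ln (sech (half_logit t)) = ln 2 + ln t / 2 + ln (1 - t) / 2"
proof -
  define A where "A = exp (ln t / 2)"
  define B where "B = exp (ln (1 - t) / 2)"
  have A2: "A * A = t" unfolding A_def using t by (simp flip: exp_add)
  have B2: "B * B = 1 - t" unfolding B_def using t by (simp flip: exp_add)
  have AB: "A > 0" "B > 0" unfolding A_def B_def by auto
  have "cosh (half_logit t) = (A / B + B / A) / 2"
    by (simp add: cosh_field_def half_logit_def A_def B_def diff_divide_distrib exp_diff
        exp_minus inverse_eq_divide)
  also have "\<dots> = (A * A + B * B) / (2 * A * B)" using AB by (simp add: field_simps)
  also have "\<dots> = 1 / (2 * A * B)" using A2 B2 by simp
  finally have "sech (half_logit t) = 2 * A * B" unfolding sech_def by simp
  then show ?thesis using AB by (simp add: ln_mult A_def B_def)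
qed

definition beta_integrand :: "real \<Rightarrow> real \<Rightarrow> real \<Rightarrow> real" where
  "beta_integrand a b t = t powr (a - 1) * (1 - t) powr (b - 1)"

lemma set_integrable_beta_integrand:
  "a > 0 \<Longrightarrow> b > 0 \<Longrightarrow> set_integrable lborel {0..1} (beta_integrand a b)"
  unfolding beta_integrand_def by (rule integrable_Beta)

lemma interval_integral_beta_integrand:
  assumes "a > 0" "b > 0"
  shows "(LBINT t=0..1. beta_integrand a b t) = Beta a b"
proof -
  have "(LBINT t=0..1. beta_integrand a b t) = (LBINT t:{0..1}. beta_integrand a b t)"
    using interval_integral_Icc[of 0 1 "beta_integrand a b"] by (simp add: zero_ereal_def one_ereal_def)
  also have "\<dots> = integral {0..1} (beta_integrand a b)"
    by (rule set_borel_integral_eq_integral[OF set_integrable_beta_integrand[OF assms]])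
  also have "\<dots> = Beta a b"
    unfolding beta_integrand_def[abs_def] by (rule integral_unique[OF has_integral_Beta_real[OF assms]])
  finally show ?thesis .
qed

lemma bl_kernel_half_logit:
  assumes t: "0 < t" "t < 1"
  shows "bl_kernel c d (half_logit t) * (1 / (2 * t * (1 - t))) = beta_integrand ((c + d) / 2) ((c - d) / 2) t"
proof -
  have e1: "1 / (2 * t * (1 - t)) = exp (- ln 2 - ln t - ln (1 - t))"
    using t by (simp add: exp_diff exp_minus)
  have e2: "sech (half_logit t) powr c = exp (c * (ln 2 + ln t / 2 + ln (1 - t) / 2))"
    using sech_pos[of "half_logit t"] by (simp add: powr_def ln_sech_half_logit[OF t])
  have e3: "(2::real) powr (1 - c) = exp ((1 - c) * ln 2)" by (simp add: powr_def)
  have e4: "beta_integrand ((c + d) / 2) ((c - d) / 2) t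
      = exp (((c + d) / 2 - 1) * ln t + ((c - d) / 2 - 1) * ln (1 - t))"
    using t by (simp add: beta_integrand_def powr_def exp_add)
  show ?thesis unfolding bl_kernel_def e1 e2 e3 e4 exp_add[symmetric]
    by (rule arg_cong[where f = exp]) (simp add: half_logit_def field_simps)
qed

text \<open>The substitution \<open>x = half_logit t\<close>, i.e. \<open>t = (1 + tanh x) / 2\<close>, maps the kernel onto the
  Beta integrand on \<open>]0, 1[\<close>.\<close>
lemma
  fixes c d :: real
  assumes cd: "c - d > 0" "c + d > 0"
  shows integrable_bl_kernel: "integrable lborel (bl_kernel c d)"
    and integral_bl_kernel_substitution:
      "(\<integral>x. bl_kernel c d x \<partial>lborel) = (LBINT t=0..1. beta_integrand ((c + d) / 2) ((c - d) / 2) t)"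
proof -
  define h where "h = bl_kernel c d"
  define g' where "g' = (\<lambda>t::real. 1 / (2 * t * (1 - t)))"
  define B where "B = beta_integrand ((c + d) / 2) ((c - d) / 2)"
  have hg: "h (half_logit t) * g' t = B t" if "0 < t" "t < 1" for t
    using bl_kernel_half_logit[OF that] unfolding h_def g'_def B_def by simp
  have deriv: "DERIV half_logit t :> g' t" if "0 < ereal t" "ereal t < 1" for t
    using that unfolding half_logit_def g'_def
    by (auto intro!: derivative_eq_intros simp: field_simps)
  have cont_h: "isCont h y" for y
    using sech_pos unfolding h_def bl_kernel_def sech_def by (auto intro!: continuous_intros)
  have cont_g': "isCont g' t" if "0 < ereal t" "ereal t < 1" for t
    using that unfolding g'_def by (auto intro!: continuous_intros)
  have h_nonneg: "0 \<le> h y" for y unfolding h_def bl_kernel_def by simp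
  have g'_nonneg: "0 \<le> g' t" if "0 \<le> ereal t" "ereal t \<le> 1" for t
    using that unfolding g'_def by auto
  have lim0: "((ereal \<circ> half_logit \<circ> real_of_ereal) \<longlongrightarrow> -\<infinity>) (at_right 0)"
    unfolding zero_ereal_def ereal_tendsto_simps half_logit_def by real_asymp
  have lim1: "((ereal \<circ> half_logit \<circ> real_of_ereal) \<longlongrightarrow> \<infinity>) (at_left 1)"
    unfolding one_ereal_def ereal_tendsto_simps half_logit_def by real_asymp
  have "set_integrable lborel (einterval 0 1) B"
    unfolding B_def using cd
    by (intro set_integrable_subset[OF set_integrable_beta_integrand]) (auto simp: einterval_def)
  then have int_subst: "set_integrable lborel (einterval 0 1) (\<lambda>t. h (half_logit t) * g' t)"
    by (rule set_integrable_cong[THEN iffD1, rotated -1]) (auto simp: einterval_def hg)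
  have UNIV_eq: "einterval (-\<infinity>) \<infinity> = UNIV" by (auto simp: einterval_def)
  from interval_integral_substitution_nonneg[of 0 1 half_logit g' h,
      OF _ deriv _ cont_g' _ g'_nonneg lim0 lim1 int_subst] cont_h h_nonneg
  have int: "set_integrable lborel (einterval (-\<infinity>) \<infinity>) h"
    and subst: "(LBINT x=-\<infinity>..\<infinity>. h x) = (LBINT x=0..1. h (half_logit x) * g' x)"
    by auto
  from int show "integrable lborel (bl_kernel c d)" by (simp add: h_def UNIV_eq set_integrable_def)
  have "(\<integral>x. h x \<partial>lborel) = (LBINT x=-\<infinity>..\<infinity>. h x)"
    by (simp add: interval_lebesgue_integral_def UNIV_eq set_lebesgue_integral_def)
  also have "\<dots> = (LBINT x=0..1. B x)"
    unfolding subst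
    by (auto simp: interval_lebesgue_integral_def zero_ereal_def one_ereal_def einterval_def hg
        intro!: set_lebesgue_integral_cong)
  finally show "(\<integral>x. bl_kernel c d x \<partial>lborel) = (LBINT t=0..1. beta_integrand ((c + d) / 2) ((c - d) / 2) t)"
    by (simp add: h_def B_def)
qed

lemma integral_bl_kernel:
  fixes c d :: real
  assumes "c - d > 0" "c + d > 0"
  shows "(\<integral>x. bl_kernel c d x \<partial>lborel) = Beta ((c - d) / 2) ((c + d) / 2)"
  using assms
  by (simp add: integral_bl_kernel_substitution interval_integral_beta_integrand Beta_commute)

section \<open>Differentiation under the integral sign\<close>

lemma abs_difference_quotient_le:
  fixes f f' :: "real \<Rightarrow> real"
  assumes "y \<in> {c<..<d}" "t \<in> {c<..<d}" "y \<noteq> t"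
    and der: "\<And>s. s \<in> {c<..<d} \<Longrightarrow> (f has_real_derivative f' s) (at s)"
    and bd: "\<And>s. s \<in> {c<..<d} \<Longrightarrow> \<bar>f' s\<bar> \<le> B"
  shows "\<bar>(f y - f t) / (y - t)\<bar> \<le> B"
proof -
  have mvt: "\<exists>z \<in> {c<..<d}. (f v - f u) / (v - u) = f' z"
    if uv: "u < v" "u \<in> {c<..<d}" "v \<in> {c<..<d}" for u v
  proof -
    from MVT2[OF \<open>u < v\<close>, of f f'] uv der obtain z where z: "u < z" "z < v" "f v - f u = (v - u) * f' z"
      by (metis greaterThanLessThan_iff le_less_trans less_le_trans)
    then show ?thesis using uv by (intro bexI[of _ z]) auto
  qed
  have swap: "(f y - f t) / (y - t) = (f t - f y) / (t - y)"
    by (metis minus_diff_eq minus_divide_divide)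
  obtain z where z: "z \<in> {c<..<d}" "(f y - f t) / (y - t) = f' z"
  proof (cases "y < t")
    case True
    then show ?thesis using that mvt[of y t] swap assms by auto
  next
    case False
    then show ?thesis using that mvt[of t y] assms by auto
  qed
  show ?thesis unfolding z(2) by (rule bd[OF z(1)])
qed

lemma DERIV_integral_dominated:
  fixes F F' :: "real \<Rightarrow> 'a \<Rightarrow> real"
  assumes t0: "t0 \<in> {c<..<d}"
    and int: "\<And>t. t \<in> {c<..<d} \<Longrightarrow> integrable M (F t)"
    and der: "\<And>x t. t \<in> {c<..<d} \<Longrightarrow> ((\<lambda>t. F t x) has_real_derivative F' t x) (at t)"
    and meas: "F' t0 \<in> borel_measurable M"
    and G_int: "integrable M G"
    and G_bound: "\<And>x t. t \<in> {c<..<d} \<Longrightarrow> \<bar>F' t x\<bar> \<le> G x"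
  shows "((\<lambda>t. \<integral>x. F t x \<partial>M) has_real_derivative (\<integral>x. F' t0 x \<partial>M)) (at t0)"
proof -
  let ?S = "{c<..<d}"
  have "((\<lambda>t. \<integral>x. F t x \<partial>M) has_real_derivative (\<integral>x. F' t0 x \<partial>M)) (at t0 within ?S)"
    unfolding has_field_derivative_iff tendsto_at_iff_sequentially comp_def
  proof (intro allI impI)
    fix X :: "nat \<Rightarrow> real"
    assume X: "\<forall>i. X i \<in> ?S - {t0}" and X_lim: "X \<longlonglongrightarrow> t0"
    define q where "q = (\<lambda>i x. (F (X i) x - F t0 x) / (X i - t0))"
    have q_integral: "((\<integral>x. F (X i) x \<partial>M) - (\<integral>x. F t0 x \<partial>M)) / (X i - t0) = integral\<^sup>L M (q i)"
      for i
      using X int t0 by (simp add: q_def Bochner_Integration.integral_diff)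
    have X_at: "filterlim X (at t0) sequentially"
      using X X_lim by (auto simp: filterlim_at)
    have "(\<lambda>i. integral\<^sup>L M (q i)) \<longlonglongrightarrow> integral\<^sup>L M (F' t0)"
    proof (rule integral_dominated_convergence[where w = G])
      show "q i \<in> borel_measurable M" for i
        unfolding q_def using X int t0 by auto
      show "AE x in M. (\<lambda>i. q i x) \<longlonglongrightarrow> F' t0 x"
      proof (rule AE_I2)
        fix x
        have "((\<lambda>y. (F y x - F t0 x) / (y - t0)) \<longlongrightarrow> F' t0 x) (at t0)"
          using der[OF t0, of x] by (simp add: has_field_derivative_iff)
        from filterlim_compose[OF this X_at] show "(\<lambda>i. q i x) \<longlonglongrightarrow> F' t0 x"
          unfolding q_def by simp
      qed
      show "AE x in M. norm (q i x) \<le> G x" for i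
        unfolding q_def real_norm_def
        by (intro AE_I2 abs_difference_quotient_le[where f' = "\<lambda>t. F' t x" for x])
           (use X t0 der G_bound in auto)
    qed (use meas G_int in auto)
    then show "(\<lambda>i. ((\<integral>x. F (X i) x \<partial>M) - (\<integral>x. F t0 x \<partial>M)) / (X i - t0))
        \<longlonglongrightarrow> (\<integral>x. F' t0 x \<partial>M)"
      by (simp add: q_integral)
  qed
  then show ?thesis by (simp only: at_within_open[OF t0 open_greaterThanLessThan])
qed

section \<open>Moments of exponentially tilted densities\<close>

lemma power_div_fact_le_exp:
  fixes x :: real
  assumes "0 \<le> x"
  shows "x ^ n / fact n \<le> exp x"
proof -
  have s: "summable (\<lambda>k. x ^ k /\<^sub>R fact k)" using exp_converges[of x] by (rule sums_summable)
  have "x ^ n / fact n = (\<Sum>k\<in>{n}. x ^ k /\<^sub>R fact k)" by (simp add: divide_inverse_commute)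
  also have "\<dots> \<le> (\<Sum>k. x ^ k /\<^sub>R fact k)"
    by (rule sum_le_suminf[OF s]) (use assms in auto)
  also have "\<dots> = exp x" using exp_converges[of x] by (simp add: sums_iff)
  finally show ?thesis .
qed

lemma abs_power_le_exp:
  fixes y \<delta> :: real
  assumes "\<delta> > 0"
  shows "\<bar>y\<bar> ^ n \<le> fact n / \<delta> ^ n * (exp (\<delta> * y) + exp (- (\<delta> * y)))"
proof -
  have "(\<delta> * \<bar>y\<bar>) ^ n / fact n \<le> exp (\<delta> * \<bar>y\<bar>)"
    by (rule power_div_fact_le_exp) (use assms in simp)
  also have "\<dots> \<le> exp (\<delta> * y) + exp (- (\<delta> * y))"
    by (cases "y \<ge> 0") (auto simp: abs_if add_increasing add_increasing2)
  finally have "\<delta> ^ n * \<bar>y\<bar> ^ n \<le> fact n * (exp (\<delta> * y) + exp (- (\<delta> * y)))"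
    by (simp add: power_mult_distrib divide_le_eq mult.commute)
  then show ?thesis using assms by (simp add: field_simps)
qed

lemma exp_mult_le_exp_add_exp:
  fixes y \<delta> s t :: real
  assumes "\<bar>s - t\<bar> \<le> \<delta>"
  shows "exp (s * y) \<le> exp ((t + \<delta>) * y) + exp ((t - \<delta>) * y)"
proof (cases "y \<ge> 0")
  case True
  have "s \<le> t + \<delta>" using assms by (simp add: abs_le_iff)
  then have "s * y \<le> (t + \<delta>) * y" using True by (intro mult_right_mono) auto
  then show ?thesis by (simp add: add_increasing2)
next
  case False
  have "t - \<delta> \<le> s" using assms by (simp add: abs_le_iff)
  then have "(t - \<delta>) * y \<ge> s * y" using False by (intro mult_right_mono_neg) auto
  then show ?thesis by (simp add: add_increasing)
qed

lemma abs_power_mult_exp_le: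
  fixes y \<delta> s t :: real
  assumes "\<delta> > 0" "\<bar>s - t\<bar> \<le> \<delta>"
  shows "\<bar>y ^ n * exp (s * y)\<bar>
     \<le> fact n / \<delta> ^ n * (exp ((t + 2 * \<delta>) * y) + 2 * exp (t * y) + exp ((t - 2 * \<delta>) * y))"
proof -
  have "\<bar>y ^ n * exp (s * y)\<bar> = \<bar>y\<bar> ^ n * exp (s * y)" by (simp add: abs_mult power_abs)
  also have "\<dots> \<le> (fact n / \<delta> ^ n * (exp (\<delta> * y) + exp (- (\<delta> * y)))) *
      (exp ((t + \<delta>) * y) + exp ((t - \<delta>) * y))"
    using assms abs_power_le_exp exp_mult_le_exp_add_exp by (intro mult_mono) auto
  also have "\<dots> = fact n / \<delta> ^ n * (exp ((t + 2 * \<delta>) * y) + 2 * exp (t * y) + exp ((t - 2 * \<delta>) * y))"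
    by (simp add: algebra_simps flip: exp_add)
  finally show ?thesis .
qed

lemma DERIV_unique_on_interval:
  fixes f g :: "real \<Rightarrow> real"
  assumes "(f has_real_derivative D) (at t)" "(g has_real_derivative E) (at t)"
    and "t \<in> {c<..<d}" "\<And>x. x \<in> {c<..<d} \<Longrightarrow> f x = g x"
  shows "D = E"
proof -
  have "(g has_real_derivative D) (at t)"
    by (rule has_field_derivative_transform_within_open[OF assms(1) _ assms(3)]) (use assms(4) in auto)
  then show ?thesis using assms(2) by (rule DERIV_unique)
qed

locale exp_tilt =
  fixes f Y :: "real \<Rightarrow> real" and c d :: real
  assumes nonneg: "\<And>x. 0 \<le> f x"
    and f_measurable [measurable]: "f \<in> borel_measurable lborel"
    and Y_measurable [measurable]: "Y \<in> borel_measurable lborel"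
    and integrable_tilt: "\<And>t. t \<in> {c<..<d} \<Longrightarrow> integrable lborel (\<lambda>x. f x * exp (t * Y x))"
begin

abbreviation moment :: "nat \<Rightarrow> real \<Rightarrow> real" where
  "moment n t \<equiv> \<integral>x. f x * Y x ^ n * exp (t * Y x) \<partial>lborel"

definition envelope :: "real \<Rightarrow> real \<Rightarrow> real \<Rightarrow> real" where
  "envelope t \<delta> x =
     f x * exp ((t + 2 * \<delta>) * Y x) + 2 * (f x * exp (t * Y x)) + f x * exp ((t - 2 * \<delta>) * Y x)"

lemma tilt_margin:
  assumes "t \<in> {c<..<d}"
  obtains \<delta> where "\<delta> > 0" "t - 2 * \<delta> \<in> {c<..<d}" "t + 2 * \<delta> \<in> {c<..<d}"
    "{t - \<delta><..<t + \<delta>} \<subseteq> {c<..<d}"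
proof
  define \<delta> where "\<delta> = min (t - c) (d - t) / 3"
  show "\<delta> > 0" "t - 2 * \<delta> \<in> {c<..<d}" "t + 2 * \<delta> \<in> {c<..<d}" "{t - \<delta><..<t + \<delta>} \<subseteq> {c<..<d}"
    using assms by (auto simp: \<delta>_def min_def field_simps)
qed

lemma integrable_envelope:
  assumes "t \<in> {c<..<d}" "t - 2 * \<delta> \<in> {c<..<d}" "t + 2 * \<delta> \<in> {c<..<d}"
  shows "integrable lborel (\<lambda>x. K * envelope t \<delta> x)"
  using integrable_tilt[OF assms(1)] integrable_tilt[OF assms(2)] integrable_tilt[OF assms(3)]
  by (auto simp: envelope_def)

lemma abs_moment_integrand_le:
  assumes "\<delta> > 0" "\<bar>s - t\<bar> \<le> \<delta>"
  shows "\<bar>f x * Y x ^ n * exp (s * Y x)\<bar> \<le> fact n / \<delta> ^ n * envelope t \<delta> x"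
proof -
  have "\<bar>f x * Y x ^ n * exp (s * Y x)\<bar> = f x * \<bar>Y x ^ n * exp (s * Y x)\<bar>"
    using nonneg[of x] by (simp add: abs_mult)
  also have "\<dots> \<le> f x * (fact n / \<delta> ^ n *
      (exp ((t + 2 * \<delta>) * Y x) + 2 * exp (t * Y x) + exp ((t - 2 * \<delta>) * Y x)))"
    by (intro mult_left_mono abs_power_mult_exp_le assms nonneg)
  finally show ?thesis by (simp add: envelope_def algebra_simps)
qed

lemma integrable_moment:
  assumes t: "t \<in> {c<..<d}"
  shows "integrable lborel (\<lambda>x. f x * Y x ^ n * exp (t * Y x))"
proof -
  obtain \<delta> where \<delta>: "\<delta> > 0" "t - 2 * \<delta> \<in> {c<..<d}" "t + 2 * \<delta> \<in> {c<..<d}"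
    using tilt_margin[OF t] by blast
  show ?thesis
  proof (rule Bochner_Integration.integrable_bound)
    show "integrable lborel (\<lambda>x. fact n / \<delta> ^ n * envelope t \<delta> x)"
      by (rule integrable_envelope[OF t \<delta>(2,3)])
    show "AE x in lborel. norm (f x * Y x ^ n * exp (t * Y x)) \<le> norm (fact n / \<delta> ^ n * envelope t \<delta> x)"
      unfolding real_norm_def
      by (intro AE_I2 order_trans[OF abs_moment_integrand_le[OF \<delta>(1)] abs_ge_self]) (use \<delta> in simp)
  qed measurable
qed

lemma DERIV_moment:
  assumes t: "t \<in> {c<..<d}"
  shows "(moment n has_real_derivative moment (Suc n) t) (at t)"
proof -
  obtain \<delta> where \<delta>: "\<delta> > 0" "t - 2 * \<delta> \<in> {c<..<d}" "t + 2 * \<delta> \<in> {c<..<d}"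
      and sub: "{t - \<delta><..<t + \<delta>} \<subseteq> {c<..<d}"
    using tilt_margin[OF t] by blast
  show ?thesis
  proof (rule DERIV_integral_dominated[where c = "t - \<delta>" and d = "t + \<delta>"
        and G = "\<lambda>x. fact (Suc n) / \<delta> ^ Suc n * envelope t \<delta> x"])
    show "integrable lborel (\<lambda>x. f x * Y x ^ n * exp (s * Y x))" if "s \<in> {t - \<delta><..<t + \<delta>}" for s
      using sub that by (intro integrable_moment) auto
    show "((\<lambda>s. f x * Y x ^ n * exp (s * Y x)) has_real_derivative f x * Y x ^ Suc n * exp (s * Y x))
        (at s)" for x s
      by (auto intro!: derivative_eq_intros simp: algebra_simps)
    show "\<bar>f x * Y x ^ Suc n * exp (s * Y x)\<bar> \<le> fact (Suc n) / \<delta> ^ Suc n * envelope t \<delta> x"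
      if "s \<in> {t - \<delta><..<t + \<delta>}" for x s
      using that by (intro abs_moment_integrand_le \<delta>(1)) auto
    show "integrable lborel (\<lambda>x. fact (Suc n) / \<delta> ^ Suc n * envelope t \<delta> x)"
      by (rule integrable_envelope[OF t \<delta>(2,3)])
  qed (use \<delta> in auto)
qed

end

locale exp_tilt_cumulant = exp_tilt +
  fixes G G1 G2 G3 :: "real \<Rightarrow> real"
  assumes tilt_mass: "\<And>t. t \<in> {c<..<d} \<Longrightarrow> (\<integral>x. f x * exp (t * Y x) \<partial>lborel) = exp (G t)"
    and DERIV_G: "\<And>t. t \<in> {c<..<d} \<Longrightarrow> (G has_real_derivative G1 t) (at t)"
    and DERIV_G1: "\<And>t. t \<in> {c<..<d} \<Longrightarrow> (G1 has_real_derivative G2 t) (at t)"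
    and DERIV_G2: "\<And>t. t \<in> {c<..<d} \<Longrightarrow> (G2 has_real_derivative G3 t) (at t)"
begin

lemma moment_0: "t \<in> {c<..<d} \<Longrightarrow> moment 0 t = exp (G t)"
  using tilt_mass by simp

lemma moment_1:
  assumes t: "t \<in> {c<..<d}"
  shows "moment 1 t = G1 t * exp (G t)"
proof -
  have "((\<lambda>t. exp (G t)) has_real_derivative exp (G t) * G1 t) (at t)"
    using DERIV_G[OF t] by (auto intro!: derivative_eq_intros)
  from DERIV_unique_on_interval[OF DERIV_moment[OF t, of 0] this t] moment_0 show ?thesis
    by simp
qed

lemma moment_2:
  assumes t: "t \<in> {c<..<d}"
  shows "moment 2 t = (G2 t + G1 t ^ 2) * exp (G t)"
proof -
  have "((\<lambda>t. G1 t * exp (G t)) has_real_derivative G2 t * exp (G t) + G1 t * (exp (G t) * G1 t))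
      (at t)"
    using DERIV_G[OF t] DERIV_G1[OF t] by (auto intro!: derivative_eq_intros)
  from DERIV_unique_on_interval[OF DERIV_moment[OF t, of 1] this t] moment_1 show ?thesis
    by (simp add: algebra_simps power2_eq_square numeral_2_eq_2)
qed

lemma moment_3:
  assumes t: "t \<in> {c<..<d}"
  shows "moment 3 t = (G3 t + 3 * G1 t * G2 t + G1 t ^ 3) * exp (G t)"
proof -
  have "((\<lambda>t. (G2 t + G1 t ^ 2) * exp (G t)) has_real_derivative
      (G3 t + 2 * G1 t * G2 t) * exp (G t) + (G2 t + G1 t ^ 2) * (exp (G t) * G1 t)) (at t)"
    using DERIV_G[OF t] DERIV_G1[OF t] DERIV_G2[OF t]
    by (auto intro!: derivative_eq_intros simp: algebra_simps power2_eq_square)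
  from DERIV_unique_on_interval[OF DERIV_moment[OF t, of 2] this t] moment_2 show ?thesis
    by (simp add: algebra_simps power2_eq_square power3_eq_cube numeral_3_eq_3 numeral_2_eq_2)
qed

lemma central_moments:
  assumes 0: "0 \<in> {c<..<d}" "G 0 = 0"
  shows "integrable lborel (\<lambda>x. f x * (Y x - G1 0) ^ 2)"
    "(\<integral>x. f x * (Y x - G1 0) ^ 2 \<partial>lborel) = G2 0"
    "integrable lborel (\<lambda>x. f x * (Y x - G1 0) ^ 3)"
    "(\<integral>x. f x * (Y x - G1 0) ^ 3 \<partial>lborel) = G3 0"
proof -
  let ?m = "G1 0"
  have i: "integrable lborel (\<lambda>x. f x * Y x ^ n)" for n
    using integrable_moment[OF 0(1), of n] by simp
  have i0: "integrable lborel f" using i[of 0] by simp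
  have i1: "integrable lborel (\<lambda>x. f x * Y x)" using i[of 1] by simp
  have e0: "(\<integral>x. f x \<partial>lborel) = 1" using moment_0[OF 0(1)] 0 by simp
  have e1: "(\<integral>x. f x * Y x \<partial>lborel) = ?m" using moment_1[OF 0(1)] 0 by simp
  have e2: "(\<integral>x. f x * Y x ^ 2 \<partial>lborel) = G2 0 + ?m ^ 2" using moment_2[OF 0(1)] 0 by simp
  have e3: "(\<integral>x. f x * Y x ^ 3 \<partial>lborel) = G3 0 + 3 * ?m * G2 0 + ?m ^ 3"
    using moment_3[OF 0(1)] 0 by simp
  have p2: "f x * (Y x - ?m) ^ 2 = f x * Y x ^ 2 - 2 * ?m * (f x * Y x) + ?m ^ 2 * f x" for x
    by (simp add: algebra_simps power2_eq_square)
  have p3: "f x * (Y x - ?m) ^ 3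
      = f x * Y x ^ 3 - 3 * ?m * (f x * Y x ^ 2) + 3 * ?m ^ 2 * (f x * Y x) - ?m ^ 3 * f x" for x
    by (simp add: algebra_simps power2_eq_square power3_eq_cube)
  note integral_simps = Bochner_Integration.integral_add Bochner_Integration.integral_diff
  show "integrable lborel (\<lambda>x. f x * (Y x - ?m) ^ 2)"
    "integrable lborel (\<lambda>x. f x * (Y x - ?m) ^ 3)"
    unfolding p2 p3 using i0 i1 i[of 2] i[of 3] by auto
  have "(\<integral>x. f x * (Y x - ?m) ^ 2 \<partial>lborel) = (G2 0 + ?m ^ 2) - 2 * ?m * ?m + ?m ^ 2 * 1"
    unfolding p2 using i0 i1 i[of 2]
    by (simp add: integral_simps e0 e1 e2 del: integral_mult_right integral_mult_left)
  then show "(\<integral>x. f x * (Y x - ?m) ^ 2 \<partial>lborel) = G2 0" by (simp add: power2_eq_square)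
  have "(\<integral>x. f x * (Y x - ?m) ^ 3 \<partial>lborel)
      = (G3 0 + 3 * ?m * G2 0 + ?m ^ 3) - 3 * ?m * (G2 0 + ?m ^ 2) + 3 * ?m ^ 2 * ?m - ?m ^ 3 * 1"
    unfolding p3 using i0 i1 i[of 2] i[of 3]
    by (simp add: integral_simps e0 e1 e2 e3 del: integral_mult_right integral_mult_left)
  then show "(\<integral>x. f x * (Y x - ?m) ^ 3 \<partial>lborel) = G3 0"
    by (simp add: power2_eq_square power3_eq_cube algebra_simps)
qed

end

section \<open>The beta-logistic family as an exponential family\<close>

definition beta_a :: "real \<times> real \<Rightarrow> real" where
  "beta_a th = (fst th - snd th) / 2"

definition beta_b :: "real \<times> real \<Rightarrow> real" where
  "beta_b th = (fst th + snd th) / 2"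

text \<open>Components of the coordinate direction \<open>cdir i\<close> in \<open>beta_a\<close> and in \<open>fst\<close>
  (its \<open>beta_b\<close>-component is always \<open>1/2\<close>).\<close>
definition a_coeff :: "nat \<Rightarrow> real" where
  "a_coeff i = (if i = 1 then 1/2 else -1/2)"

definition th1_coeff :: "nat \<Rightarrow> real" where
  "th1_coeff i = (if i = 1 then 1 else 0)"

lemma beta_a_line [simp]: "beta_a (th + t *\<^sub>R v) = beta_a th + t * beta_a v"
  by (simp add: beta_a_def algebra_simps diff_divide_distrib add_divide_distrib)

lemma beta_b_line [simp]: "beta_b (th + t *\<^sub>R v) = beta_b th + t * beta_b v"
  by (simp add: beta_b_def algebra_simps add_divide_distrib)

lemma beta_a_cdir [simp]: "beta_a (cdir i) = a_coeff i"
  by (simp add: beta_a_def cdir_def a_coeff_def)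

lemma beta_b_cdir [simp]: "beta_b (cdir i) = 1/2"
  by (simp add: beta_b_def cdir_def)

lemma fst_cdir [simp]: "fst (cdir i) = th1_coeff i"
  by (simp add: cdir_def th1_coeff_def)

lemma snd_cdir [simp]: "snd (cdir i) = 1 - th1_coeff i"
  by (simp add: cdir_def th1_coeff_def)

lemma fst_eq_beta_a_add_beta_b: "fst th = beta_a th + beta_b th"
  by (simp add: beta_a_def beta_b_def field_simps)

lemma Theta_iff: "th \<in> Theta \<longleftrightarrow> beta_a th > 0 \<and> beta_b th > 0"
  by (simp add: Theta_def beta_a_def beta_b_def)

lemma Theta_pos:
  assumes "th \<in> Theta"
  shows "beta_a th > 0" "beta_b th > 0" "fst th > 0"
  using assms fst_eq_beta_a_add_beta_b[of th] by (auto simp: Theta_iff)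

lemma open_Theta: "open Theta"
  unfolding Theta_def by (intro open_Collect_conj open_Collect_less continuous_intros)

lemma pos_notin_nonpos_Ints: "(x::real) > 0 \<Longrightarrow> x \<notin> \<int>\<^sub>\<le>\<^sub>0"
  by auto

lemma Beta_real_pos: "a > 0 \<Longrightarrow> b > 0 \<Longrightarrow> Beta a b > (0::real)"
  by (simp add: Beta_def)

lemma ln_Beta:
  fixes a b :: real
  assumes "a > 0" "b > 0"
  shows "ln (Beta a b) = ln_Gamma a + ln_Gamma b - ln_Gamma (a + b)"
proof -
  have "Gamma a > 0" "Gamma b > 0" "Gamma (a + b) > 0" using assms by simp_all
  then have "ln (Beta a b) = ln (Gamma a) + ln (Gamma b) - ln (Gamma (a + b))"
    by (simp add: Beta_def ln_div ln_mult)
  then show ?thesis using assms by (simp add: ln_Gamma_real_pos)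
qed

definition suff_stat :: "nat \<Rightarrow> real \<Rightarrow> real" where
  "suff_stat i x = (if i = 1 then ln (sech x) - ln 2 else x)"

definition log_partition :: "real \<times> real \<Rightarrow> real" where
  "log_partition th = ln (Beta (beta_a th) (beta_b th)) - ln 2"

definition log_partition_grad :: "nat \<Rightarrow> real \<times> real \<Rightarrow> real" where
  "log_partition_grad i th =
     a_coeff i * Digamma (beta_a th) + 1/2 * Digamma (beta_b th) - th1_coeff i * Digamma (fst th)"

lemma log_partition_eq_ln_Gamma:
  "th \<in> Theta \<Longrightarrow>
     log_partition th = ln_Gamma (beta_a th) + ln_Gamma (beta_b th) - ln_Gamma (fst th) - ln 2"
  by (simp add: log_partition_def Theta_iff ln_Beta fst_eq_beta_a_add_beta_b)

lemma blpdf_eq_exp: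
  assumes "th \<in> Theta"
  shows "blpdf th x = exp (fst th * suff_stat 1 x + snd th * x - log_partition th)"
proof -
  have B: "Beta (beta_a th) (beta_b th) > 0" using assms by (simp add: Theta_iff Beta_real_pos)
  have "blpdf th x = exp ((1 - fst th) * ln 2) * exp (fst th * ln (sech x)) * exp (snd th * x) /
      exp (ln (Beta (beta_a th) (beta_b th)))"
    using B sech_pos[of x] by (simp add: blpdf_def powr_def beta_a_def beta_b_def)
  also have "\<dots> = exp (fst th * suff_stat 1 x + snd th * x - log_partition th)"
    by (simp add: suff_stat_def log_partition_def algebra_simps flip: exp_add exp_diff)
  finally show ?thesis .
qed

lemma blpdf_pos: "th \<in> Theta \<Longrightarrow> blpdf th x > 0"
  by (simp add: blpdf_eq_exp)

lemma continuous_on_blpdf: "continuous_on UNIV (blpdf th)"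
  unfolding blpdf_def sech_def divide_inverse[of _ "Beta _ _"] by (auto intro!: continuous_intros)

lemma borel_measurable_blpdf [measurable]: "blpdf th \<in> borel_measurable lborel"
  using borel_measurable_continuous_onI[OF continuous_on_blpdf] by simp

lemma
  assumes "th \<in> Theta"
  shows integrable_blpdf: "integrable lborel (blpdf th)"
    and integral_blpdf: "(\<integral>x. blpdf th x \<partial>lborel) = 1"
proof -
  have cd: "fst th - snd th > 0" "fst th + snd th > 0" using assms by (auto simp: Theta_def)
  have B: "Beta ((fst th - snd th) / 2) ((fst th + snd th) / 2) > 0"
    using cd by (simp add: Beta_real_pos)
  show "integrable lborel (blpdf th)"
    using integrable_bl_kernel[OF cd] by (simp add: blpdf_eq_bl_kernel[abs_def])
  show "(\<integral>x. blpdf th x \<partial>lborel) = 1"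
    using integral_bl_kernel[OF cd] B by (simp add: blpdf_eq_bl_kernel[abs_def])
qed

lemma loglik_eq: "th \<in> Theta \<Longrightarrow> loglik th x = fst th * suff_stat 1 x + snd th * x - log_partition th"
  by (simp add: loglik_def blpdf_eq_exp)

lemma open_line_preimage_Theta: "open {t::real. th + t *\<^sub>R v \<in> Theta}"
proof -
  have "open ((\<lambda>t::real. th + t *\<^sub>R v) -` Theta)"
    by (rule continuous_open_vimage[OF open_Theta]) (auto intro!: continuous_intros)
  then show ?thesis by (simp add: vimage_def)
qed

lemma pd_eqI:
  assumes th: "th \<in> Theta" and eq: "\<And>eta. eta \<in> Theta \<Longrightarrow> f eta = g eta"
    and D: "((\<lambda>t. g (th + t *\<^sub>R cdir i)) has_real_derivative D) (at 0)"
  shows "pd i f th = D"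
proof -
  have "((\<lambda>t. f (th + t *\<^sub>R cdir i)) has_real_derivative D) (at 0)"
    by (rule has_field_derivative_transform_within_open[OF D open_line_preimage_Theta[of th "cdir i"]])
       (use th eq in auto)
  then show ?thesis unfolding pd_def by (rule DERIV_imp_deriv)
qed

lemma line_segment_in_Theta:
  assumes "th \<in> Theta"
  obtains \<epsilon> :: real where "\<epsilon> > 0" "\<And>t. t \<in> {-\<epsilon><..<\<epsilon>} \<Longrightarrow> th + t *\<^sub>R v \<in> Theta"
proof -
  obtain e where e: "e > 0" "ball th e \<subseteq> Theta"
    using open_Theta assms by (meson open_contains_ball)
  show ?thesis
  proof (rule that[of "e / (1 + norm v)"])
    show "e / (1 + norm v) > 0" using e by (simp add: add_pos_nonneg)
    fix t :: real
    assume "t \<in> {-(e / (1 + norm v))<..<e / (1 + norm v)}"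
    then have "\<bar>t\<bar> < e / (1 + norm v)" by auto
    then have "\<bar>t\<bar> * (1 + norm v) < e" by (simp add: less_divide_eq add_pos_nonneg)
    moreover have "\<bar>t\<bar> * norm v \<le> \<bar>t\<bar> * (1 + norm v)" by (simp add: mult_left_mono)
    ultimately have "dist th (th + t *\<^sub>R v) < e" by (simp add: dist_norm)
    then show "th + t *\<^sub>R v \<in> Theta" using e by auto
  qed
qed

text \<open>\<open>lp_line_deriv n th v\<close> is the \<open>(n + 1)\<close>-st derivative of \<open>\<lambda>t. log_partition (th + t *\<^sub>R v)\<close>.\<close>
definition lp_line_deriv :: "nat \<Rightarrow> real \<times> real \<Rightarrow> real \<times> real \<Rightarrow> real \<Rightarrow> real" where
  "lp_line_deriv n th v t = beta_a v ^ Suc n * Polygamma n (beta_a th + t * beta_a v)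
     + beta_b v ^ Suc n * Polygamma n (beta_b th + t * beta_b v)
     - fst v ^ Suc n * Polygamma n (fst th + t * fst v)"

lemma DERIV_log_partition_line:
  assumes "th + t *\<^sub>R v \<in> Theta"
  shows "((\<lambda>s. log_partition (th + s *\<^sub>R v)) has_real_derivative lp_line_deriv 0 th v t) (at t)"
proof -
  have "((\<lambda>s. ln_Gamma (beta_a th + s * beta_a v) + ln_Gamma (beta_b th + s * beta_b v)
        - ln_Gamma (fst th + s * fst v) - ln 2) has_real_derivative lp_line_deriv 0 th v t) (at t)"
    using Theta_pos[OF assms]
    by (auto intro!: derivative_eq_intros simp: lp_line_deriv_def mult.commute)
  then show ?thesis
    by (rule has_field_derivative_transform_within_open[OF _ open_line_preimage_Theta])
       (use assms in \<open>auto simp: log_partition_eq_ln_Gamma\<close>)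
qed

lemma DERIV_lp_line_deriv:
  assumes "th + t *\<^sub>R v \<in> Theta"
  shows "(lp_line_deriv n th v has_real_derivative lp_line_deriv (Suc n) th v t) (at t)"
  unfolding lp_line_deriv_def[abs_def] using Theta_pos[OF assms]
  by (auto intro!: derivative_eq_intros simp: pos_notin_nonpos_Ints lp_line_deriv_def mult_ac)

lemma score_eq:
  assumes th: "th \<in> Theta"
  shows "score i th x = suff_stat i x - log_partition_grad i th"
  unfolding score_def
proof (rule pd_eqI[OF th loglik_eq])
  have "((\<lambda>t. log_partition (th + t *\<^sub>R cdir i)) has_real_derivative log_partition_grad i th) (at 0)"
    using DERIV_log_partition_line[of th 0 "cdir i"] th
    by (simp add: lp_line_deriv_def log_partition_grad_def)
  then have "((\<lambda>t. fst (th + t *\<^sub>R cdir i) * suff_stat 1 x + snd (th + t *\<^sub>R cdir i) * x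
      - log_partition (th + t *\<^sub>R cdir i)) has_real_derivative
      th1_coeff i * suff_stat 1 x + (1 - th1_coeff i) * x - log_partition_grad i th) (at 0)"
    by (auto intro!: derivative_eq_intros)
  moreover have "th1_coeff i * suff_stat 1 x + (1 - th1_coeff i) * x = suff_stat i x"
    by (simp add: th1_coeff_def suff_stat_def)
  ultimately show "((\<lambda>t. fst (th + t *\<^sub>R cdir i) * suff_stat 1 x + snd (th + t *\<^sub>R cdir i) * x
      - log_partition (th + t *\<^sub>R cdir i)) has_real_derivative
      suff_stat i x - log_partition_grad i th) (at 0)"
    by (simp only:)
qed

section \<open>Inverses of \<open>2 \<times> 2\<close> matrices\<close>

text \<open>Matrices are functions of the indices \<open>1, 2\<close>, as for the Fisher metric.\<close>
definition det2 :: "(nat \<Rightarrow> nat \<Rightarrow> real) \<Rightarrow> real" where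
  "det2 A = A 1 1 * A 2 2 - A 1 2 * A 2 1"

definition adj2 :: "(nat \<Rightarrow> nat \<Rightarrow> real) \<Rightarrow> nat \<Rightarrow> nat \<Rightarrow> real" where
  "adj2 A i j = (if i = 1 \<and> j = 1 then A 2 2 else if i = 2 \<and> j = 2 then A 1 1 else - A i j)"

definition inv2 :: "(nat \<Rightarrow> nat \<Rightarrow> real) \<Rightarrow> nat \<Rightarrow> nat \<Rightarrow> real" where
  "inv2 A i j = adj2 A i j / det2 A"

definition inv2_deriv :: "(nat \<Rightarrow> nat \<Rightarrow> real) \<Rightarrow> (nat \<Rightarrow> nat \<Rightarrow> real) \<Rightarrow> nat \<Rightarrow> nat \<Rightarrow> real" where
  "inv2_deriv A A' i j = - (\<Sum>p\<in>{1,2}. \<Sum>q\<in>{1,2}. inv2 A i p * A' p q * inv2 A q j)"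

lemma adj2_mult:
  assumes "i \<in> {1,2}" "j \<in> {1,2}"
  shows "(\<Sum>n\<in>{1,2}. adj2 A i n * A n j) = (if i = j then det2 A else 0)"
  using assms by (auto simp: adj2_def det2_def algebra_simps)

lemma inv2_mult:
  assumes "det2 A \<noteq> 0" "i \<in> {1,2}" "j \<in> {1,2}"
  shows "(\<Sum>n\<in>{1,2}. inv2 A i n * A n j) = (if i = j then 1 else 0)"
proof -
  have "(\<Sum>n\<in>{1,2}. inv2 A i n * A n j) = (\<Sum>n\<in>{1,2}. adj2 A i n * A n j) / det2 A"
    by (simp add: inv2_def add_divide_distrib)
  then show ?thesis using adj2_mult[OF assms(2,3)] assms(1) by simp
qed

lemma DERIV_inv2:
  fixes A :: "real \<Rightarrow> nat \<Rightarrow> nat \<Rightarrow> real"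
  assumes D: "\<And>i j. ((\<lambda>t. A t i j) has_real_derivative A' i j) (at 0)"
    and det: "det2 (A 0) \<noteq> 0" and ij: "i \<in> {1,2}" "j \<in> {1,2}"
  shows "((\<lambda>t. inv2 (A t) i j) has_real_derivative inv2_deriv (A 0) A' i j) (at 0)"
proof -
  have adj: "((\<lambda>t. adj2 (A t) i j) has_real_derivative adj2 A' i j) (at 0)"
    by (cases "i = 1 \<and> j = 1"; cases "i = 2 \<and> j = 2") (auto simp: adj2_def intro: D DERIV_minus[OF D])
  define det' where "det' = A' 1 1 * A 0 2 2 + A' 2 2 * A 0 1 1 - (A' 1 2 * A 0 2 1 + A' 2 1 * A 0 1 2)"
  have "((\<lambda>t. det2 (A t)) has_real_derivative det') (at 0)"
    unfolding det2_def det'_def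
    by (intro DERIV_diff DERIV_mult D)
  from DERIV_divide[OF adj this det]
  have "((\<lambda>t. inv2 (A t) i j) has_real_derivative
      (adj2 A' i j * det2 (A 0) - adj2 (A 0) i j * det') / (det2 (A 0) * det2 (A 0))) (at 0)"
    by (simp add: inv2_def)
  moreover have "adj2 A' i j * det2 (A 0) - adj2 (A 0) i j * det'
      = - (\<Sum>p\<in>{1,2}. \<Sum>q\<in>{1,2}. adj2 (A 0) i p * A' p q * adj2 (A 0) q j)"
    using ij by (auto simp: adj2_def det2_def det'_def algebra_simps)
  moreover have "inv2_deriv (A 0) A' i j
      = - (\<Sum>p\<in>{1,2}. \<Sum>q\<in>{1,2}. adj2 (A 0) i p * A' p q * adj2 (A 0) q j) / (det2 (A 0) * det2 (A 0))"
    using det by (simp add: inv2_deriv_def inv2_def field_simps)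
  ultimately show ?thesis by simp
qed

section \<open>Fisher metric and skewness tensor\<close>

text \<open>\<open>lp_d2\<close>, \<open>lp_d3\<close>, \<open>lp_d4\<close> are the second, third and fourth partial derivatives of
  \<open>log_partition\<close> in the coordinates \<open>\<theta>\<close>.\<close>
definition lp_d2 :: "real \<times> real \<Rightarrow> nat \<Rightarrow> nat \<Rightarrow> real" where
  "lp_d2 th i j = a_coeff i * a_coeff j * Polygamma 1 (beta_a th) + 1/4 * Polygamma 1 (beta_b th)
     - th1_coeff i * th1_coeff j * Polygamma 1 (fst th)"

definition lp_d3 :: "real \<times> real \<Rightarrow> nat \<Rightarrow> nat \<Rightarrow> nat \<Rightarrow> real" where
  "lp_d3 th i j k = a_coeff i * a_coeff j * a_coeff k * Polygamma 2 (beta_a th)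
     + 1/8 * Polygamma 2 (beta_b th) - th1_coeff i * th1_coeff j * th1_coeff k * Polygamma 2 (fst th)"

definition lp_d4 :: "real \<times> real \<Rightarrow> nat \<Rightarrow> nat \<Rightarrow> nat \<Rightarrow> nat \<Rightarrow> real" where
  "lp_d4 th i j k l = a_coeff i * a_coeff j * a_coeff k * a_coeff l * Polygamma 3 (beta_a th)
     + 1/16 * Polygamma 3 (beta_b th)
     - th1_coeff i * th1_coeff j * th1_coeff k * th1_coeff l * Polygamma 3 (fst th)"

lemma lp_d2_commute: "lp_d2 th i j = lp_d2 th j i"
  by (simp add: lp_d2_def mult.commute)

text \<open>Tilting \<open>blpdf th\<close> by \<open>exp (t * Y)\<close> with \<open>Y = v \<bullet> suff_stat\<close> gives
  \<open>exp (G t) * blpdf (th + t *\<^sub>R v)\<close>, \<open>G t = log_partition (th + t *\<^sub>R v) - log_partition th\<close>.\<close>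
lemma exp_tilt_cumulant_blpdf:
  assumes th: "th \<in> Theta" and line: "\<And>t. t \<in> {-\<epsilon><..<\<epsilon>} \<Longrightarrow> th + t *\<^sub>R v \<in> Theta"
  shows "exp_tilt_cumulant (blpdf th) (\<lambda>x. fst v * suff_stat 1 x + snd v * x) (-\<epsilon>) \<epsilon>
     (\<lambda>t. log_partition (th + t *\<^sub>R v) - log_partition th)
     (lp_line_deriv 0 th v) (lp_line_deriv 1 th v) (lp_line_deriv 2 th v)"
proof
  let ?Y = "\<lambda>x. fst v * suff_stat 1 x + snd v * x"
  let ?G = "\<lambda>t. log_partition (th + t *\<^sub>R v) - log_partition th"
  have tilt: "blpdf th x * exp (t * ?Y x) = exp (?G t) * blpdf (th + t *\<^sub>R v) x"
    if "t \<in> {-\<epsilon><..<\<epsilon>}" for t x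
    using line[OF that] th by (simp add: blpdf_eq_exp algebra_simps flip: exp_add)
  show "0 \<le> blpdf th x" for x using blpdf_pos[OF th] less_imp_le by blast
  have "continuous_on UNIV ?Y" unfolding suff_stat_def sech_def
    by (auto intro!: continuous_intros)
  then show "?Y \<in> borel_measurable lborel" using borel_measurable_continuous_onI by simp
  show "integrable lborel (\<lambda>x. blpdf th x * exp (t * ?Y x))" if "t \<in> {-\<epsilon><..<\<epsilon>}" for t
    unfolding tilt[OF that] using integrable_blpdf[OF line[OF that]] by simp
  show "(\<integral>x. blpdf th x * exp (t * ?Y x) \<partial>lborel) = exp (?G t)" if "t \<in> {-\<epsilon><..<\<epsilon>}" for t
    unfolding tilt[OF that] using integral_blpdf[OF line[OF that]] by simp
  show "(?G has_real_derivative lp_line_deriv 0 th v t) (at t)" if "t \<in> {-\<epsilon><..<\<epsilon>}" for t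
    using DERIV_log_partition_line[OF line[OF that]] by (auto intro!: derivative_eq_intros)
  show "(lp_line_deriv 0 th v has_real_derivative lp_line_deriv 1 th v t) (at t)"
    if "t \<in> {-\<epsilon><..<\<epsilon>}" for t
    using DERIV_lp_line_deriv[OF line[OF that], of 0] by simp
  show "(lp_line_deriv 1 th v has_real_derivative lp_line_deriv 2 th v t) (at t)"
    if "t \<in> {-\<epsilon><..<\<epsilon>}" for t
    using DERIV_lp_line_deriv[OF line[OF that], of 1] by (simp add: numeral_2_eq_2)
qed simp

text \<open>The score in direction \<open>v\<close> is the centred statistic \<open>Y - G1 0\<close> of the tilt above.\<close>
lemma score_dir_moments:
  fixes v :: "real \<times> real"
  assumes th: "th \<in> Theta"
  defines "s \<equiv> (\<lambda>x. fst v * score 1 th x + snd v * score 2 th x)"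
  shows "integrable lborel (\<lambda>x. blpdf th x * s x ^ 2)"
    "(\<integral>x. blpdf th x * s x ^ 2 \<partial>lborel) =
       fst v ^ 2 * lp_d2 th 1 1 + 2 * fst v * snd v * lp_d2 th 1 2 + snd v ^ 2 * lp_d2 th 2 2"
    "integrable lborel (\<lambda>x. blpdf th x * s x ^ 3)"
    "(\<integral>x. blpdf th x * s x ^ 3 \<partial>lborel) =
       fst v ^ 3 * lp_d3 th 1 1 1 + 3 * fst v ^ 2 * snd v * lp_d3 th 1 1 2
       + 3 * fst v * snd v ^ 2 * lp_d3 th 1 2 2 + snd v ^ 3 * lp_d3 th 2 2 2"
proof -
  obtain \<epsilon> :: real where \<epsilon>: "\<epsilon> > 0" and line: "\<And>t. t \<in> {-\<epsilon><..<\<epsilon>} \<Longrightarrow> th + t *\<^sub>R v \<in> Theta"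
    using line_segment_in_Theta[OF th] by blast
  interpret exp_tilt_cumulant "blpdf th" "\<lambda>x. fst v * suff_stat 1 x + snd v * x" "-\<epsilon>" \<epsilon>
    "\<lambda>t. log_partition (th + t *\<^sub>R v) - log_partition th"
    "lp_line_deriv 0 th v" "lp_line_deriv 1 th v" "lp_line_deriv 2 th v"
    by (rule exp_tilt_cumulant_blpdf[OF th line])
  have at_0: "0 \<in> {-\<epsilon><..<\<epsilon>}" "log_partition (th + 0 *\<^sub>R v) - log_partition th = 0"
    using \<epsilon> by auto
  have s_centered: "s x = (fst v * suff_stat 1 x + snd v * x) - lp_line_deriv 0 th v 0" for x
    unfolding s_def using th
    by (simp add: score_eq log_partition_grad_def lp_line_deriv_def a_coeff_def th1_coeff_def
        suff_stat_def beta_a_def beta_b_def field_simps)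
  note moments = central_moments[OF at_0, folded s_centered]
  show "integrable lborel (\<lambda>x. blpdf th x * s x ^ 2)"
    "integrable lborel (\<lambda>x. blpdf th x * s x ^ 3)"
    using moments(1,3) by auto
  show "(\<integral>x. blpdf th x * s x ^ 2 \<partial>lborel) =
       fst v ^ 2 * lp_d2 th 1 1 + 2 * fst v * snd v * lp_d2 th 1 2 + snd v ^ 2 * lp_d2 th 2 2"
    unfolding moments(2)
    by (simp add: lp_line_deriv_def lp_d2_def a_coeff_def th1_coeff_def beta_a_def[of v]
        beta_b_def[of v] power2_eq_square field_simps)
  show "(\<integral>x. blpdf th x * s x ^ 3 \<partial>lborel) =
       fst v ^ 3 * lp_d3 th 1 1 1 + 3 * fst v ^ 2 * snd v * lp_d3 th 1 1 2
       + 3 * fst v * snd v ^ 2 * lp_d3 th 1 2 2 + snd v ^ 3 * lp_d3 th 2 2 2"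
    unfolding moments(4)
    by (simp add: lp_line_deriv_def lp_d3_def a_coeff_def th1_coeff_def beta_a_def[of v]
        beta_b_def[of v] power2_eq_square power3_eq_cube field_simps)
qed

lemma integral_mult_polarization:
  fixes f S T :: "'a \<Rightarrow> real"
  assumes "integrable M (\<lambda>x. f x * S x ^ 2)" "integrable M (\<lambda>x. f x * T x ^ 2)"
    "integrable M (\<lambda>x. f x * (S x + T x) ^ 2)"
  shows "(\<integral>x. f x * (S x * T x) \<partial>M) =
    ((\<integral>x. f x * (S x + T x) ^ 2 \<partial>M) - (\<integral>x. f x * S x ^ 2 \<partial>M) - (\<integral>x. f x * T x ^ 2 \<partial>M)) / 2"
proof -
  have "f x * (S x * T x) = (f x * (S x + T x) ^ 2 - f x * S x ^ 2 - f x * T x ^ 2) / 2" for x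
    by (simp add: power2_eq_square field_simps)
  then have "(\<integral>x. f x * (S x * T x) \<partial>M)
      = (\<integral>x. (f x * (S x + T x) ^ 2 - f x * S x ^ 2 - f x * T x ^ 2) / 2 \<partial>M)"
    by (simp only:)
  then show ?thesis using assms by (simp add: Bochner_Integration.integral_diff)
qed

lemma integral_cubic_polarization:
  fixes f S T :: "'a \<Rightarrow> real"
  assumes "integrable M (\<lambda>x. f x * S x ^ 3)" "integrable M (\<lambda>x. f x * T x ^ 3)"
    "integrable M (\<lambda>x. f x * (S x + T x) ^ 3)" "integrable M (\<lambda>x. f x * (S x - T x) ^ 3)"
  shows "(\<integral>x. f x * (S x * S x * T x) \<partial>M) = ((\<integral>x. f x * (S x + T x) ^ 3 \<partial>M)
      - (\<integral>x. f x * (S x - T x) ^ 3 \<partial>M) - 2 * (\<integral>x. f x * T x ^ 3 \<partial>M)) / 6"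
    "(\<integral>x. f x * (S x * T x * T x) \<partial>M) = ((\<integral>x. f x * (S x + T x) ^ 3 \<partial>M)
      + (\<integral>x. f x * (S x - T x) ^ 3 \<partial>M) - 2 * (\<integral>x. f x * S x ^ 3 \<partial>M)) / 6"
proof -
  have "f x * (S x * S x * T x)
      = (f x * (S x + T x) ^ 3 - f x * (S x - T x) ^ 3 - 2 * (f x * T x ^ 3)) / 6" for x
    by (simp add: power3_eq_cube field_simps)
  then have "(\<integral>x. f x * (S x * S x * T x) \<partial>M) = (\<integral>x. (f x * (S x + T x) ^ 3
      - f x * (S x - T x) ^ 3 - 2 * (f x * T x ^ 3)) / 6 \<partial>M)"
    by (simp only:)
  then show "(\<integral>x. f x * (S x * S x * T x) \<partial>M) = ((\<integral>x. f x * (S x + T x) ^ 3 \<partial>M)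
      - (\<integral>x. f x * (S x - T x) ^ 3 \<partial>M) - 2 * (\<integral>x. f x * T x ^ 3 \<partial>M)) / 6"
    using assms by (simp add: Bochner_Integration.integral_diff)
  have "f x * (S x * T x * T x)
      = (f x * (S x + T x) ^ 3 + f x * (S x - T x) ^ 3 - 2 * (f x * S x ^ 3)) / 6" for x
    by (simp add: power3_eq_cube field_simps)
  then have "(\<integral>x. f x * (S x * T x * T x) \<partial>M) = (\<integral>x. (f x * (S x + T x) ^ 3
      + f x * (S x - T x) ^ 3 - 2 * (f x * S x ^ 3)) / 6 \<partial>M)"
    by (simp only:)
  then show "(\<integral>x. f x * (S x * T x * T x) \<partial>M) = ((\<integral>x. f x * (S x + T x) ^ 3 \<partial>M)
      + (\<integral>x. f x * (S x - T x) ^ 3 \<partial>M) - 2 * (\<integral>x. f x * S x ^ 3 \<partial>M)) / 6"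
    using assms by (simp add: Bochner_Integration.integral_diff Bochner_Integration.integral_add)
qed

lemma fisher_eq:
  assumes th: "th \<in> Theta" and ij: "i \<in> {1,2}" "j \<in> {1,2}"
  shows "fisher i j th = lp_d2 th i j"
proof -
  note m10 = score_dir_moments[OF th, of "(1, 0)", simplified]
  note m01 = score_dir_moments[OF th, of "(0, 1)", simplified]
  note m11 = score_dir_moments[OF th, of "(1, 1)", simplified]
  have "fisher i i th = lp_d2 th i i" if "i \<in> {1, 2}" for i
    using that m10(2) m01(2) by (auto simp: fisher_def Ex_def power2_eq_square)
  moreover have "fisher 1 2 th = lp_d2 th 1 2"
    using integral_mult_polarization[OF m10(1) m01(1) m11(1)] m10(2) m01(2) m11(2)
    by (simp add: fisher_def Ex_def)
  moreover have "fisher 2 1 th = fisher 1 2 th"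
    by (simp add: fisher_def mult.commute)
  ultimately show ?thesis using ij lp_d2_commute[of th 2 1] by auto
qed

lemma skewT_eq:
  assumes th: "th \<in> Theta" and ijk: "i \<in> {1,2}" "j \<in> {1,2}" "k \<in> {1,2}"
  shows "skewT i j k th = lp_d3 th i j k"
proof -
  note m10 = score_dir_moments[OF th, of "(1, 0)", simplified]
  note m01 = score_dir_moments[OF th, of "(0, 1)", simplified]
  note m11 = score_dir_moments[OF th, of "(1, 1)", simplified]
  note m1m = score_dir_moments[OF th, of "(1, -1)", simplified]
  note pol = integral_cubic_polarization[OF m10(3) m01(3) m11(3), simplified, OF m1m(3)]
  have "skewT 1 1 1 th = lp_d3 th 1 1 1" "skewT 2 2 2 th = lp_d3 th 2 2 2"
    using m10(4) m01(4) by (simp_all add: skewT_def Ex_def power3_eq_cube)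
  moreover have "skewT 1 1 2 th = lp_d3 th 1 1 2" "skewT 1 2 2 th = lp_d3 th 1 2 2"
    using pol m10(4) m01(4) m11(4) m1m(4) by (simp_all add: skewT_def Ex_def)
  moreover have "skewT 1 2 1 th = skewT 1 1 2 th" "skewT 2 1 1 th = skewT 1 1 2 th"
    "skewT 2 1 2 th = skewT 1 2 2 th" "skewT 2 2 1 th = skewT 1 2 2 th"
    by (simp_all add: skewT_def mult_ac)
  moreover have "lp_d3 th 1 2 1 = lp_d3 th 1 1 2" "lp_d3 th 2 1 1 = lp_d3 th 1 1 2"
    "lp_d3 th 2 1 2 = lp_d3 th 1 2 2" "lp_d3 th 2 2 1 = lp_d3 th 1 2 2"
    by (simp_all add: lp_d3_def mult_ac)
  ultimately show ?thesis using ijk by auto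
qed

lemma integral_pos_if_continuous:
  fixes g :: "real \<Rightarrow> real"
  assumes cont: "continuous_on UNIV g" and nonneg: "\<And>x. 0 \<le> g x" and int: "integrable lborel g"
    and pos: "g x0 > 0"
  shows "(\<integral>x. g x \<partial>lborel) > 0"
proof -
  define c where "c = g x0 / 2"
  have c: "c > 0" using pos by (simp add: c_def)
  have "isCont g x0" using cont by (simp add: continuous_on_eq_continuous_at)
  then obtain \<delta> where \<delta>: "\<delta> > 0" and near: "\<And>x. dist x x0 < \<delta> \<Longrightarrow> dist (g x) (g x0) < c"
    using c unfolding continuous_at_eps_delta c_def by blast
  have le: "c * indicator {x0 - \<delta>/2..x0 + \<delta>/2} x \<le> g x" for x
  proof (cases "x \<in> {x0 - \<delta>/2..x0 + \<delta>/2}")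
    case True
    then have "dist x x0 < \<delta>" using \<delta> by (auto simp: dist_real_def abs_le_iff)
    then have "\<bar>g x - g x0\<bar> < c" using near by (simp add: dist_real_def)
    then have "g x > c" using abs_ge_minus_self[of "g x - g x0"] unfolding c_def by linarith
    then show ?thesis using True by simp
  qed (use nonneg in auto)
  have "integrable lborel (\<lambda>x. c * indicator {x0 - \<delta>/2..x0 + \<delta>/2} x :: real)"
    by (intro integrable_mult_right integrable_real_indicator) (auto simp: emeasure_lborel_Icc_eq)
  then have "(\<integral>x. c * indicator {x0 - \<delta>/2..x0 + \<delta>/2} x \<partial>lborel) \<le> (\<integral>x. g x \<partial>lborel)"
    using int le by (rule integral_mono)
  moreover have "(\<integral>x. c * indicator {x0 - \<delta>/2..x0 + \<delta>/2} x \<partial>lborel) = c * \<delta>"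
    using \<delta> by (simp add: measure_def)
  ultimately show ?thesis using mult_pos_pos[OF c \<delta>] by linarith
qed

text \<open>\<open>sech\<close> is even and \<open>sech 1 < 1\<close>: comparing \<open>x = \<plusminus>1\<close> kills \<open>v2\<close>, then \<open>x = 0, 1\<close> kills \<open>v1\<close>.\<close>
lemma stat_combination_nonzero:
  fixes v1 v2 C1 C2 :: real
  assumes "(v1, v2) \<noteq> (0, 0)"
  shows "\<exists>x. v1 * (ln (sech x) - ln 2 - C1) + v2 * (x - C2) \<noteq> 0"
proof (rule ccontr)
  assume "\<not> ?thesis"
  then have z: "\<And>x. v1 * (ln (sech x) - ln 2 - C1) + v2 * (x - C2) = 0" by auto
  have "cosh (1::real) > 1" using cosh_real_ge_1[of 1] cosh_real_one_iff[of 1] by linarith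
  then have ln_sech_1: "ln (sech 1) \<noteq> 0" by (simp add: sech_def)
  have "sech (-1) = sech 1" by (simp add: sech_def)
  then have "v2 = 0" using z[of 1] z[of "-1"] by (simp add: algebra_simps)
  moreover have "v1 * ln (sech 1) = 0"
    using z[of 1] z[of 0] \<open>v2 = 0\<close> by (simp add: sech_def algebra_simps)
  ultimately show False using assms ln_sech_1 by auto
qed

lemma lp_d2_quadratic_form_pos:
  assumes th: "th \<in> Theta" and v: "v \<noteq> (0, 0)"
  shows "fst v ^ 2 * lp_d2 th 1 1 + 2 * fst v * snd v * lp_d2 th 1 2 + snd v ^ 2 * lp_d2 th 2 2 > 0"
proof -
  define s where "s = (\<lambda>x. fst v * score 1 th x + snd v * score 2 th x)"
  have s_eq: "s x = fst v * (ln (sech x) - ln 2 - log_partition_grad 1 th)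
      + snd v * (x - log_partition_grad 2 th)" for x
    using th by (simp add: s_def score_eq suff_stat_def)
  obtain x0 where x0: "s x0 \<noteq> 0"
    using stat_combination_nonzero[of "fst v" "snd v"] v unfolding s_eq by (metis prod.collapse)
  have "(\<integral>x. blpdf th x * s x ^ 2 \<partial>lborel) > 0"
  proof (rule integral_pos_if_continuous[of _ x0])
    show "continuous_on UNIV (\<lambda>x. blpdf th x * s x ^ 2)"
      unfolding s_eq using continuous_on_blpdf[of th] unfolding sech_def
      by (auto intro!: continuous_intros)
    show "0 \<le> blpdf th x * s x ^ 2" for x using blpdf_pos[OF th, of x] by simp
    show "integrable lborel (\<lambda>x. blpdf th x * s x ^ 2)"
      using score_dir_moments(1)[OF th, of v] by (simp add: s_def)
    show "blpdf th x0 * s x0 ^ 2 > 0" using x0 blpdf_pos[OF th, of x0] by simp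
  qed
  then show ?thesis using score_dir_moments(2)[OF th, of v] by (simp add: s_def)
qed

lemma det2_lp_d2_pos:
  assumes th: "th \<in> Theta"
  shows "det2 (lp_d2 th) > 0"
proof -
  have h22: "lp_d2 th 2 2 > 0" using lp_d2_quadratic_form_pos[OF th, of "(0, 1)"] by simp
  then have "(lp_d2 th 2 2, - lp_d2 th 1 2) \<noteq> (0, 0)" by auto
  from lp_d2_quadratic_form_pos[OF th this]
  have "lp_d2 th 2 2 * (lp_d2 th 1 1 * lp_d2 th 2 2 - lp_d2 th 1 2 * lp_d2 th 1 2) > 0"
    by (simp add: power2_eq_square algebra_simps)
  then show ?thesis
    using h22 lp_d2_commute[of th 2 1] by (simp add: det2_def zero_less_mult_iff)
qed

section \<open>Connections and curvature\<close>

lemma DERIV_Polygamma_line: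
  assumes "x > 0" "m = Suc n"
  shows "((\<lambda>t. Polygamma n (x + t * k)) has_real_derivative k * Polygamma m x) (at 0)"
  using assms by (auto intro!: derivative_eq_intros simp: pos_notin_nonpos_Ints mult.commute)

lemma fst_line_cdir: "fst (th + t *\<^sub>R cdir i) = fst th + t * th1_coeff i"
  by simp

lemma DERIV_lp_d2_line:
  assumes th: "th \<in> Theta"
  shows "((\<lambda>t. lp_d2 (th + t *\<^sub>R cdir i) j k) has_real_derivative lp_d3 th i j k) (at 0)"
proof -
  have "((\<lambda>t. a_coeff j * a_coeff k * Polygamma 1 (beta_a th + t * a_coeff i)
       + 1/4 * Polygamma 1 (beta_b th + t * (1/2))
       - th1_coeff j * th1_coeff k * Polygamma 1 (fst th + t * th1_coeff i)) has_real_derivative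
       a_coeff j * a_coeff k * (a_coeff i * Polygamma 2 (beta_a th)) + 1/4 * (1/2 * Polygamma 2 (beta_b th))
       - th1_coeff j * th1_coeff k * (th1_coeff i * Polygamma 2 (fst th))) (at 0)"
    using Theta_pos[OF th] by (intro DERIV_diff DERIV_add DERIV_cmult DERIV_Polygamma_line) auto
  then show ?thesis
    unfolding lp_d2_def lp_d3_def fst_line_cdir beta_a_line beta_b_line beta_a_cdir beta_b_cdir
    by (simp add: mult_ac)
qed

lemma DERIV_lp_d3_line:
  assumes th: "th \<in> Theta"
  shows "((\<lambda>t. lp_d3 (th + t *\<^sub>R cdir i) j k l) has_real_derivative lp_d4 th i j k l) (at 0)"
proof -
  have "((\<lambda>t. a_coeff j * a_coeff k * a_coeff l * Polygamma 2 (beta_a th + t * a_coeff i)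
       + 1/8 * Polygamma 2 (beta_b th + t * (1/2))
       - th1_coeff j * th1_coeff k * th1_coeff l * Polygamma 2 (fst th + t * th1_coeff i))
     has_real_derivative
       a_coeff j * a_coeff k * a_coeff l * (a_coeff i * Polygamma 3 (beta_a th))
       + 1/8 * (1/2 * Polygamma 3 (beta_b th))
       - th1_coeff j * th1_coeff k * th1_coeff l * (th1_coeff i * Polygamma 3 (fst th))) (at 0)"
    using Theta_pos[OF th] by (intro DERIV_diff DERIV_add DERIV_cmult DERIV_Polygamma_line) auto
  then show ?thesis
    unfolding lp_d3_def lp_d4_def fst_line_cdir beta_a_line beta_b_line beta_a_cdir beta_b_cdir
    by (simp add: mult_ac)
qed

lemma pd_fisher:
  assumes th: "th \<in> Theta" and jk: "j \<in> {1,2}" "k \<in> {1,2}"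
  shows "pd i (fisher j k) th = lp_d3 th i j k"
  by (rule pd_eqI[OF th _ DERIV_lp_d2_line[OF th]]) (use fisher_eq jk in auto)

lemma christoffel_eq:
  assumes th: "th \<in> Theta" and ijk: "i \<in> {1,2}" "j \<in> {1,2}" "k \<in> {1,2}"
  shows "christoffel i j k th = lp_d3 th i j k / 2"
  using ijk by (simp add: christoffel_def pd_fisher[OF th] lp_d3_def mult_ac)

lemma alpha_conn_low_eq:
  assumes th: "th \<in> Theta" and ijk: "i \<in> {1,2}" "j \<in> {1,2}" "k \<in> {1,2}"
  shows "alpha_conn_low \<alpha> i j k th = (1 - \<alpha>) / 2 * lp_d3 th i j k"
  using ijk by (simp add: alpha_conn_low_def christoffel_eq[OF th] skewT_eq[OF th] field_simps)

lemma detG_eq: "th \<in> Theta \<Longrightarrow> detG th = det2 (lp_d2 th)"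
  by (simp add: detG_def det2_def fisher_eq)

lemma fisher_inv_eq:
  assumes th: "th \<in> Theta" and ij: "i \<in> {1,2}" "j \<in> {1,2}"
  shows "fisher_inv i j th = inv2 (lp_d2 th) i j"
  using ij by (auto simp: fisher_inv_def inv2_def adj2_def detG_eq[OF th] fisher_eq[OF th])

text \<open>Counterparts of \<open>alpha_conn\<close>, of its partial derivatives and of \<open>alpha_curv\<close> in terms of the
  derivatives of \<open>log_partition\<close>; \<open>hess_curv_quad\<close> collects the quadratic terms of the
  \<open>-1\<close>-curvature.\<close>
definition hess_conn :: "real \<Rightarrow> nat \<Rightarrow> nat \<Rightarrow> nat \<Rightarrow> real \<times> real \<Rightarrow> real" where
  "hess_conn \<alpha> i j k th = (\<Sum>s\<in>{1,2}. (1 - \<alpha>) / 2 * lp_d3 th i j s * inv2 (lp_d2 th) s k)"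

definition hess_conn_deriv :: "real \<Rightarrow> nat \<Rightarrow> nat \<Rightarrow> nat \<Rightarrow> nat \<Rightarrow> real \<times> real \<Rightarrow> real" where
  "hess_conn_deriv \<alpha> i j k n th = (\<Sum>s\<in>{1,2}. (1 - \<alpha>) / 2 *
     (lp_d4 th i j k s * inv2 (lp_d2 th) s n + lp_d3 th j k s * inv2_deriv (lp_d2 th) (lp_d3 th i) s n))"

definition hess_curv :: "real \<Rightarrow> nat \<Rightarrow> nat \<Rightarrow> nat \<Rightarrow> nat \<Rightarrow> real \<times> real \<Rightarrow> real" where
  "hess_curv \<alpha> i j k l th =
     (\<Sum>n\<in>{1,2}. (hess_conn_deriv \<alpha> i j k n th - hess_conn_deriv \<alpha> j i k n th
        + (\<Sum>m\<in>{1,2}. hess_conn \<alpha> j k m th * hess_conn \<alpha> i m n th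
                       - hess_conn \<alpha> i k m th * hess_conn \<alpha> j m n th)) * lp_d2 th n l)"

definition hess_curv_quad :: "nat \<Rightarrow> nat \<Rightarrow> nat \<Rightarrow> nat \<Rightarrow> real \<times> real \<Rightarrow> real" where
  "hess_curv_quad i j k l th =
     (\<Sum>n\<in>{1,2}. (\<Sum>m\<in>{1,2}. hess_conn (-1) j k m th * hess_conn (-1) i m n th
                             - hess_conn (-1) i k m th * hess_conn (-1) j m n th) * lp_d2 th n l)"

lemma alpha_conn_eq:
  assumes th: "th \<in> Theta" and ijk: "i \<in> {1,2}" "j \<in> {1,2}" "k \<in> {1,2}"
  shows "alpha_conn \<alpha> i j k th = hess_conn \<alpha> i j k th"
  unfolding alpha_conn_def hess_conn_def
  by (rule sum.cong) (use ijk in \<open>auto simp: alpha_conn_low_eq[OF th] fisher_inv_eq[OF th]\<close>)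

lemma DERIV_inv2_lp_d2_line:
  assumes th: "th \<in> Theta" and ij: "i \<in> {1,2}" "j \<in> {1,2}"
  shows "((\<lambda>t. inv2 (lp_d2 (th + t *\<^sub>R cdir k)) i j) has_real_derivative
     inv2_deriv (lp_d2 th) (lp_d3 th k) i j) (at 0)"
  using DERIV_inv2[of "\<lambda>t. lp_d2 (th + t *\<^sub>R cdir k)", OF DERIV_lp_d2_line[OF th] _ ij]
    det2_lp_d2_pos[OF th]
  by simp

lemma pd_alpha_conn:
  assumes th: "th \<in> Theta" and jkn: "j \<in> {1,2}" "k \<in> {1,2}" "n \<in> {1,2}"
  shows "pd i (alpha_conn \<alpha> j k n) th = hess_conn_deriv \<alpha> i j k n th"
proof (rule pd_eqI[OF th])
  show "alpha_conn \<alpha> j k n eta = hess_conn \<alpha> j k n eta" if "eta \<in> Theta" for eta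
    using alpha_conn_eq[OF that jkn] .
  have split: "hess_conn \<alpha> j k n eta = (1 - \<alpha>) / 2 * lp_d3 eta j k 1 * inv2 (lp_d2 eta) 1 n
      + (1 - \<alpha>) / 2 * lp_d3 eta j k 2 * inv2 (lp_d2 eta) 2 n" for eta
    by (simp add: hess_conn_def)
  let ?th = "\<lambda>t. th + t *\<^sub>R cdir i"
  have "((\<lambda>t. (1 - \<alpha>) / 2 * lp_d3 (?th t) j k 1 * inv2 (lp_d2 (?th t)) 1 n
      + (1 - \<alpha>) / 2 * lp_d3 (?th t) j k 2 * inv2 (lp_d2 (?th t)) 2 n) has_real_derivative
      ((1 - \<alpha>) / 2 * lp_d4 th i j k 1 * inv2 (lp_d2 (?th 0)) 1 n
        + inv2_deriv (lp_d2 th) (lp_d3 th i) 1 n * ((1 - \<alpha>) / 2 * lp_d3 (?th 0) j k 1))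
      + ((1 - \<alpha>) / 2 * lp_d4 th i j k 2 * inv2 (lp_d2 (?th 0)) 2 n
        + inv2_deriv (lp_d2 th) (lp_d3 th i) 2 n * ((1 - \<alpha>) / 2 * lp_d3 (?th 0) j k 2))) (at 0)"
    using jkn
    by (intro DERIV_add DERIV_mult DERIV_cmult DERIV_lp_d3_line[OF th] DERIV_inv2_lp_d2_line[OF th]) auto
  then show "((\<lambda>t. hess_conn \<alpha> j k n (?th t)) has_real_derivative hess_conn_deriv \<alpha> i j k n th) (at 0)"
    unfolding split by (simp add: hess_conn_deriv_def algebra_simps)
qed

lemma alpha_curv_eq:
  assumes th: "th \<in> Theta" and ijkl: "i \<in> {1,2}" "j \<in> {1,2}" "k \<in> {1,2}" "l \<in> {1,2}"
  shows "alpha_curv \<alpha> i j k l th = hess_curv \<alpha> i j k l th"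
  unfolding alpha_curv_def hess_curv_def
  using ijkl by (simp add: pd_alpha_conn[OF th] alpha_conn_eq[OF th] fisher_eq[OF th])

text \<open>Dual flatness: as \<open>\<partial>\<^sub>i g\<^sup>-\<^sup>1 = - g\<^sup>-\<^sup>1 (\<partial>\<^sub>i g) g\<^sup>-\<^sup>1\<close>, the derivative terms of the
  \<open>-1\<close>-curvature cancel its quadratic terms, up to \<open>lp_d4 th i j k s - lp_d4 th j i k s = 0\<close>.\<close>
lemma hess_curv_minus_one: "hess_curv (-1) i j k l th = 0"
proof -
  have "lp_d4 th j i k s = lp_d4 th i j k s" for s by (simp add: lp_d4_def mult_ac)
  then show ?thesis
    unfolding hess_curv_def hess_conn_deriv_def hess_conn_def inv2_deriv_def by (simp add: algebra_simps)
qed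

text \<open>The \<open>\<alpha>\<close>-connection is \<open>(1 - \<alpha>) / 2\<close> times the \<open>-1\<close>-connection, so the curvature is a
  quadratic polynomial in \<open>(1 - \<alpha>) / 2\<close> vanishing at \<open>0\<close> and, by dual flatness, at \<open>1\<close>.\<close>
lemma hess_curv_eq: "hess_curv \<alpha> i j k l th = - (1 - \<alpha>\<^sup>2) / 4 * hess_curv_quad i j k l th"
proof -
  have conn: "hess_conn \<alpha> i j k th = (1 - \<alpha>) / 2 * hess_conn (-1) i j k th" for i j k
    by (simp add: hess_conn_def algebra_simps)
  have conn_deriv: "hess_conn_deriv \<alpha> i j k n th = (1 - \<alpha>) / 2 * hess_conn_deriv (-1) i j k n th"
    for i j k n
    by (simp add: hess_conn_deriv_def algebra_simps)
  have "hess_curv \<alpha> i j k l th = (1 - \<alpha>) / 2 * (hess_curv (-1) i j k l th - hess_curv_quad i j k l th)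
      + ((1 - \<alpha>) / 2)\<^sup>2 * hess_curv_quad i j k l th"
    unfolding hess_curv_def hess_curv_quad_def conn conn_deriv by (simp add: algebra_simps power2_eq_square)
  then show ?thesis by (simp add: hess_curv_minus_one power2_eq_square field_simps)
qed

lemma hess_conn_minus_one_lower:
  assumes th: "th \<in> Theta" and l: "l \<in> {1,2}"
  shows "(\<Sum>n\<in>{1,2}. hess_conn (-1) i m n th * lp_d2 th n l) = lp_d3 th i m l"
proof -
  have det: "det2 (lp_d2 th) \<noteq> 0" using det2_lp_d2_pos[OF th] by simp
  have "(\<Sum>n\<in>{1,2}. hess_conn (-1) i m n th * lp_d2 th n l)
      = (\<Sum>s\<in>{1,2}. lp_d3 th i m s * (\<Sum>n\<in>{1,2}. inv2 (lp_d2 th) s n * lp_d2 th n l))"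
    by (simp add: hess_conn_def algebra_simps)
  also have "\<dots> = lp_d3 th i m l"
    using inv2_mult[OF det _ l] l by auto
  finally show ?thesis .
qed

lemma hess_curv_quad_1212:
  assumes th: "th \<in> Theta"
  shows "hess_curv_quad 1 2 1 2 th = (\<Sum>s\<in>{1,2}. \<Sum>m\<in>{1,2}. adj2 (lp_d2 th) s m *
      (lp_d3 th 2 1 s * lp_d3 th 1 m 2 - lp_d3 th 1 1 s * lp_d3 th 2 m 2)) / det2 (lp_d2 th)"
proof -
  have lower: "(\<Sum>n\<in>{1,2}. hess_conn (-1) i m n th * lp_d2 th n 2) = lp_d3 th i m 2" for i m
    by (rule hess_conn_minus_one_lower[OF th]) simp
  have "hess_curv_quad 1 2 1 2 th
     = (\<Sum>m\<in>{1,2}. hess_conn (-1) 2 1 m th * (\<Sum>n\<in>{1,2}. hess_conn (-1) 1 m n th * lp_d2 th n 2)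
         - hess_conn (-1) 1 1 m th * (\<Sum>n\<in>{1,2}. hess_conn (-1) 2 m n th * lp_d2 th n 2))"
    by (simp add: hess_curv_quad_def algebra_simps)
  also have "\<dots> = (\<Sum>m\<in>{1,2}. hess_conn (-1) 2 1 m th * lp_d3 th 1 m 2
      - hess_conn (-1) 1 1 m th * lp_d3 th 2 m 2)"
    by (simp only: lower)
  also have "\<dots> = (\<Sum>s\<in>{1,2}. \<Sum>m\<in>{1,2}. adj2 (lp_d2 th) s m *
      (lp_d3 th 2 1 s * lp_d3 th 1 m 2 - lp_d3 th 1 1 s * lp_d3 th 2 m 2)) / det2 (lp_d2 th)"
    using det2_lp_d2_pos[OF th] by (simp add: hess_conn_def inv2_def field_simps)
  finally show ?thesis .
qed

lemma det2_lp_d2_closed_form: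
  "det2 (lp_d2 th) = - (Polygamma 1 (fst th) * Polygamma 1 (beta_a th)
     + (Polygamma 1 (fst th) - Polygamma 1 (beta_a th)) * Polygamma 1 (beta_b th)) / 4"
  by (simp add: det2_def lp_d2_def a_coeff_def th1_coeff_def field_simps; simp add: algebra_simps)

lemma adj2_lp_d3_contraction_closed_form:
  "(\<Sum>s\<in>{1,2}. \<Sum>m\<in>{1,2}. adj2 (lp_d2 th) s m *
      (lp_d3 th 2 1 s * lp_d3 th 1 m 2 - lp_d3 th 1 1 s * lp_d3 th 2 m 2))
   = - (Polygamma 2 (beta_b th) * (Polygamma 2 (beta_a th) * Polygamma 1 (fst th)
          - Polygamma 2 (fst th) * Polygamma 1 (beta_a th))
        - Polygamma 2 (fst th) * Polygamma 2 (beta_a th) * Polygamma 1 (beta_b th)) / 16"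
  by (simp add: adj2_def lp_d2_def lp_d3_def a_coeff_def th1_coeff_def field_simps;
      simp add: algebra_simps)

lemma alpha_curv_0_div_detG:
  assumes th: "th \<in> Theta"
  defines "p \<equiv> Polygamma 1 (beta_a th)" and "q \<equiv> Polygamma 1 (beta_b th)"
    and "r \<equiv> Polygamma 1 (fst th)" and "s \<equiv> Polygamma 2 (beta_a th)"
    and "u \<equiv> Polygamma 2 (beta_b th)" and "v \<equiv> Polygamma 2 (fst th)"
  shows "alpha_curv 0 1 2 1 2 th / detG th = (u * (s * r - v * p) - v * s * q) / (4 * (r * p + (r - p) * q)^2)"
proof -
  define N where "N = u * (s * r - v * p) - v * s * q"
  define D where "D = r * p + (r - p) * q"
  have det: "det2 (lp_d2 th) = - D / 4"
    unfolding det2_lp_d2_closed_form D_def p_def q_def r_def ..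
  have quad: "hess_curv_quad 1 2 1 2 th = - N / 16 / det2 (lp_d2 th)"
    unfolding hess_curv_quad_1212[OF th] adj2_lp_d3_contraction_closed_form
      N_def p_def q_def r_def s_def u_def v_def ..
  have "D \<noteq> 0" using det2_lp_d2_pos[OF th] det by auto
  moreover have "alpha_curv 0 1 2 1 2 th / detG th
      = - (1/4) * hess_curv_quad 1 2 1 2 th / det2 (lp_d2 th)"
    using th by (simp add: alpha_curv_eq hess_curv_eq detG_eq)
  ultimately show ?thesis
    unfolding quad det N_def[symmetric] D_def[symmetric] by (simp add: field_simps power2_eq_square)
qed

theorem mainTheorem3:
  shows "(\<forall>\<alpha>\<in>{1, -1}. \<forall>th\<in>Theta. \<forall>i\<in>{1,2}. \<forall>j\<in>{1,2}. \<forall>k\<in>{1,2}. \<forall>l\<in>{1,2}.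
            alpha_curv \<alpha> i j k l th = 0)
       \<and> (\<forall>th\<in>Theta.
            let a = (fst th - snd th) / 2; b = (fst th + snd th) / 2;
                p = Polygamma 1 a; q = Polygamma 1 b; r = Polygamma 1 (fst th);
                s = Polygamma 2 a; u = Polygamma 2 b; v = Polygamma 2 (fst th)
            in alpha_curv 0 1 2 1 2 th / detG th
               = (u * (s * r - v * p) - v * s * q) / (4 * (r * p + (r - p) * q)^2))"
proof (intro conjI ballI)
  fix \<alpha> :: real and th :: "real \<times> real" and i j k l :: nat
  assume "\<alpha> \<in> {1, -1}" "th \<in> Theta" "i \<in> {1,2}" "j \<in> {1,2}" "k \<in> {1,2}" "l \<in> {1,2}"
  then show "alpha_curv \<alpha> i j k l th = 0" by (auto simp: alpha_curv_eq hess_curv_eq)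
next
  fix th assume "th \<in> Theta"
  from alpha_curv_0_div_detG[OF this] show "let a = (fst th - snd th) / 2; b = (fst th + snd th) / 2;
                p = Polygamma 1 a; q = Polygamma 1 b; r = Polygamma 1 (fst th);
                s = Polygamma 2 a; u = Polygamma 2 b; v = Polygamma 2 (fst th)
            in alpha_curv 0 1 2 1 2 th / detG th
               = (u * (s * r - v * p) - v * s * q) / (4 * (r * p + (r - p) * q)^2)"
    by (simp add: Let_def beta_a_def beta_b_def)
qed

end
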